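(* Let $m>n>0$ and $c>0$ be constants. Let $f,g\in C(\mathbb{R}_0^+,\mathbb{R}_0^+)$, let $w\in C(\mathbb{R}_0^+,\mathbb{R}_0^+)$ be nondecreasing with $w(x)>0$ for $x>0$, and let $\alpha\in C^1(\mathbb{R}_0^+,\mathbb{R}_0^+)$ be nondecreasing with $\alpha(t)\le t$. Suppose $u\in C(\mathbb{R}_0^+,\mathbb{R}_0^+)$ satisfies, for all $t\ge0$, $$u^m(t)\le c^{m/(m-n)}+\frac{m}{m-n}\Big(\int_0^{\alpha(t)}f(s)u^n(s)w(u(s))\,ds+\int_0^t g(s)u^n(s)w(u(s))\,ds\Big).$$ Let $\Psi(x)=\int_1^x\frac{ds}{w(s^{1/(m-n)})}$ for $x>0$, and let $\tau>0$ be such that for all $t\in[0,\tau]$, $$\Psi(c)+\int_0^{\alpha(t)}f(s)\,ds+\int_0^{t}g(s)\,ds\in\mathrm{Dom}(\Psi^{-1}).$$ Then for all $t\in[0,\tau]$, $$u(t)\le\Big\{\Psi^{-1}\Big[\Psi(c)+\int_0^{\alpha(t)}f(s)\,ds+\int_0^{t}g(s)\,ds\Big]\Big\}^{1/(m-n)}.$$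
   Context: $\mathbb{R}_0^+=[0,\infty)$. $\Psi$ is strictly increasing on $(0,\infty)$, $\Psi^{-1}$ denotes its inverse, and $\mathrm{Dom}(\Psi^{-1})=\Psi((0,\infty))$. *)

theory Defs
  imports "HOL-Analysis.Analysis"
begin

definition oint :: "real \<Rightarrow> real \<Rightarrow> (real \<Rightarrow> real) \<Rightarrow> real" where
  "oint a b h = (if a \<le> b then integral {a..b} h else - integral {b..a} h)"

definition Psi :: "real \<Rightarrow> real \<Rightarrow> (real \<Rightarrow> real) \<Rightarrow> real \<Rightarrow> real" where
  "Psi m n w x = oint 1 x (\<lambda>s. 1 / w (s powr (1 / (m - n))))"

text \<open>Psi^{-1}, the inverse of Psi restricted to (0,inf); its domain is Psi ` {0<..}.\<close>
definition Psi_inv :: "real \<Rightarrow> real \<Rightarrow> (real \<Rightarrow> real) \<Rightarrow> real \<Rightarrow> real" where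
  "Psi_inv m n w = the_inv_into {0<..} (Psi m n w)"

end

theory Submission
  imports Defs
begin

(* Write r = (m-n)/m and k = m/(m-n).  The right-hand side of the hypothesis,
     v(t) = c^k + k (int_0^alpha(t) f u^n w(u) + int_0^t g u^n w(u)),
   is a nondecreasing majorant of u^m with v(0) = c^k.  Since u <= v^(1/m) on [0,t],
   the nonlinearity u^n w(u) is bounded there by q^n w(q) with q = v(t)^(1/m), and a
   direct computation shows that z = v^r satisfies
     d/dt Psi(z(t)) = z'(t) / w(z(t)^(1/(m-n))) <= f(alpha t) alpha'(t) + g(t).
   Integrating, Psi(z(t)) <= Psi(c) + int_0^alpha(t) f + int_0^t g, and since Psi is
   strictly increasing, z(t) <= Psi^-1(...); finally u(t) <= v(t)^(1/m) = z(t)^(1/(m-n)). *)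

lemma integral_from_has_real_derivative:
  fixes p :: "real \<Rightarrow> real"
  assumes p: "continuous_on {a..} p" and y: "y \<ge> a"
  shows "((\<lambda>x. integral {a..x} p) has_real_derivative p y) (at y within {a..})"
proof -
  have "((\<lambda>x. integral {a..x} p) has_real_derivative p y) (at y within {a..y+1})"
    using y by (intro integral_has_real_derivative continuous_on_subset[OF p]) auto
  moreover have "at y within {a..y+1} = at y within {a..}"
    by (rule at_within_nhd[where S = "{..<y+1}"]) auto
  ultimately show ?thesis by simp
qed

lemma integral_upto_has_real_derivative:
  fixes p \<alpha> :: "real \<Rightarrow> real"
  assumes p: "continuous_on {a..} p"
    and \<alpha>: "(\<alpha> has_real_derivative d) (at s within {b..})" and img: "\<alpha> ` {b..} \<subseteq> {a..}"
    and s: "s \<ge> b"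
  shows "((\<lambda>x. integral {a..\<alpha> x} p) has_real_derivative p (\<alpha> s) * d) (at s within {b..})"
proof -
  have "\<alpha> s \<ge> a" using img s by auto
  from has_field_derivative_subset[OF integral_from_has_real_derivative[OF p this] img]
  have "((\<lambda>x. integral {a..x} p) has_real_derivative p (\<alpha> s)) (at (\<alpha> s) within \<alpha> ` {b..})" .
  from DERIV_image_chain[OF this \<alpha>] show ?thesis by (simp add: o_def)
qed

lemma integral_from_mono:
  fixes p :: "real \<Rightarrow> real"
  assumes p: "continuous_on {a..} p" "\<And>s. s \<ge> a \<Longrightarrow> p s \<ge> 0"
    and xy: "a \<le> x" "x \<le> y"
  shows "integral {a..x} p \<le> integral {a..y} p"
  using xy p(2)
  by (intro integral_subset_le integrable_continuous_interval continuous_on_subset[OF p(1)]) auto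

lemma nonpos_derivative_imp_le_initial:
  fixes H H' :: "real \<Rightarrow> real"
  assumes deriv: "\<And>s. s \<ge> a \<Longrightarrow> (H has_real_derivative H' s) (at s within {a..})"
    and nonpos: "\<And>s. s > a \<Longrightarrow> H' s \<le> 0"
    and t: "t \<ge> a"
  shows "H t \<le> H a"
proof (rule DERIV_nonpos_imp_decreasing_open[OF t])
  fix x assume x: "a < x" "x < t"
  have "at x within {a..} = at x"
    using x by (intro at_within_interior) (simp add: interior_Ici)
  then show "\<exists>y. (H has_real_derivative y) (at x) \<and> y \<le> 0"
    using deriv[of x] nonpos[of x] x by auto
next
  have "continuous_on {a..} H"
    using deriv by (auto simp: continuous_on_eq_continuous_within intro: DERIV_continuous)
  then show "continuous_on {a..t} H" by (rule continuous_on_subset) auto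
qed

lemma oint_has_real_derivative:
  fixes h :: "real \<Rightarrow> real"
  assumes h: "continuous_on {0<..} h" and a: "a > 0" and x: "x > 0"
  shows "((\<lambda>y. oint a y h) has_real_derivative h x) (at x)"
proof -
  define e where "e = min a x / 2"
  have e: "0 < e" "e < a" "e < x" using a x by (auto simp: e_def)
  have h_int: "h integrable_on {s..t}" if "e \<le> s" for s t
    using that e by (intro integrable_continuous_interval continuous_on_subset[OF h]) auto
  have shift: "oint a y h = integral {e..y} h - integral {e..a} h" if "y > e" for y
  proof (cases "a \<le> y")
    case True
    have "integral {e..a} h + integral {a..y} h = integral {e..y} h"
      using True e by (intro Henstock_Kurzweil_Integration.integral_combine h_int) auto
    then show ?thesis using True by (simp add: oint_def)
  next
    case False
    have "integral {e..y} h + integral {y..a} h = integral {e..a} h"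
      using False that e by (intro Henstock_Kurzweil_Integration.integral_combine h_int) auto
    then show ?thesis using False by (simp add: oint_def)
  qed
  have "((\<lambda>y. integral {e..y} h) has_real_derivative h x) (at x within {e..})"
    using e by (intro integral_from_has_real_derivative continuous_on_subset[OF h]) auto
  moreover have "at x within {e..} = at x"
    using e by (intro at_within_interior) (simp add: interior_Ici)
  ultimately have "((\<lambda>y. integral {e..y} h - integral {e..a} h) has_real_derivative h x) (at x)"
    using DERIV_diff[OF _ DERIV_const] by fastforce
  then show ?thesis
    by (rule has_field_derivative_transform_within_open[where S = "{e<..}"]) (use e shift in auto)
qed

lemma Psi_has_real_derivative:
  assumes w: "continuous_on {0..} w" "\<And>x. x > 0 \<Longrightarrow> w x > 0" and x: "x > 0"
  shows "(Psi m n w has_real_derivative 1 / w (x powr (1 / (m - n)))) (at x)"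
proof -
  have "continuous_on {0<..} (\<lambda>s. s powr (1 / (m - n)))"
    by (intro continuous_intros) auto
  then have "continuous_on {0<..} (\<lambda>s. w (s powr (1 / (m - n))))"
    by (rule continuous_on_compose2[OF w(1)]) auto
  then have "continuous_on {0<..} (\<lambda>s. 1 / w (s powr (1 / (m - n))))"
    using w(2) by (intro continuous_intros) (auto intro!: less_imp_neq[symmetric])
  then show ?thesis
    unfolding Psi_def[abs_def] by (rule oint_has_real_derivative) (use x in auto)
qed

lemma Psi_strict_mono:
  assumes w: "continuous_on {0..} w" "\<And>x. x > 0 \<Longrightarrow> w x > 0"
  shows "strict_mono_on {0<..} (Psi m n w)"
proof (rule strict_mono_onI)
  fix a b :: real assume a: "a \<in> {0<..}" and "a < b"
  show "Psi m n w a < Psi m n w b"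
  proof (rule DERIV_pos_imp_increasing_open[OF \<open>a < b\<close>])
    fix x assume "a < x"
    then have "x > 0" using a by simp
    then show "\<exists>y. (Psi m n w has_real_derivative y) (at x) \<and> y > 0"
      using Psi_has_real_derivative[OF w] w(2) by force
  next
    show "continuous_on {a..b} (Psi m n w)"
      using a by (intro continuous_at_imp_continuous_on ballI
          DERIV_isCont[OF Psi_has_real_derivative[OF w]]) auto
  qed
qed

lemma le_Psi_inv:
  assumes w: "continuous_on {0..} w" "\<And>x. x > 0 \<Longrightarrow> w x > 0"
    and x: "x > 0" and le: "Psi m n w x \<le> b" and b: "b \<in> Psi m n w ` {0<..}"
  shows "x \<le> Psi_inv m n w b"
proof -
  note mono = Psi_strict_mono[OF w, of m n]
  obtain y where y: "y > 0" "b = Psi m n w y" using b by auto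
  have "Psi_inv m n w b = y"
    unfolding y(2) Psi_inv_def using y(1) strict_mono_on_imp_inj_on[OF mono]
    by (simp add: the_inv_into_f_f)
  moreover have "x \<le> y"
  proof (rule ccontr)
    assume "\<not> x \<le> y"
    then have "Psi m n w y < Psi m n w x"
      using strict_mono_onD[OF mono] x y(1) by simp
    with le y(2) show False by simp
  qed
  ultimately show ?thesis by simp
qed

(* The pointwise heart of the comparison: if v > 0 has derivative k*D with D <= E q^n w(q),
   q = v^(1/m), then z = v^r (r = (m-n)/m, k = 1/r) satisfies z' / w(z^(1/(m-n))) <= E,
   because z^(1/(m-n)) = q and r v^(r-1) k = 1 / q^n. *)
lemma majorant_power_derivative_bound:
  fixes m n v D E :: real
  assumes mn: "m > n" "n > 0" and v: "v > 0" and wq: "w (v powr (1/m)) > 0"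
    and D: "D \<le> E * ((v powr (1/m)) powr n * w (v powr (1/m)))"
  shows "(m - n) / m * v powr ((m - n) / m - 1) * (m / (m - n) * D)
           / w ((v powr ((m - n) / m)) powr (1 / (m - n))) \<le> E"
proof -
  define q where "q = v powr (1/m)"
  have q: "q > 0" using v by (simp add: q_def)
  have z_root: "(v powr ((m - n) / m)) powr (1 / (m - n)) = q"
    using mn by (simp add: q_def powr_powr)
  have "v powr ((m - n) / m - 1) * q powr n = v powr ((m - n) / m - 1 + n / m)"
    unfolding q_def by (simp add: powr_powr powr_add)
  also have "(m - n) / m - 1 + n / m = 0" using mn by (simp add: field_simps)
  finally have "v powr ((m - n) / m - 1) = 1 / q powr n"
    using v q by (simp add: field_simps)
  then have "(m - n) / m * v powr ((m - n) / m - 1) * (m / (m - n) * D)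
               / w ((v powr ((m - n) / m)) powr (1 / (m - n)))
             = ((m - n) / m * (m / (m - n))) * (D / (q powr n * w q))"
    unfolding z_root by simp
  also have "\<dots> = D / (q powr n * w q)" using mn by simp
  also have "\<dots> \<le> E"
    using D wq q by (simp add: q_def pos_divide_le_eq)
  finally show ?thesis .
qed

(* The data of the theorem. *)
locale delayed_bihari =
  fixes m n c :: real and f g w u \<alpha> \<alpha>' :: "real \<Rightarrow> real"
  assumes mn: "m > n" "n > 0" and c: "c > 0"
    and f: "continuous_on {0..} f" "\<And>t. t \<ge> 0 \<Longrightarrow> f t \<ge> 0"
    and g: "continuous_on {0..} g" "\<And>t. t \<ge> 0 \<Longrightarrow> g t \<ge> 0"
    and w: "continuous_on {0..} w" "\<And>t. t \<ge> 0 \<Longrightarrow> w t \<ge> 0"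
      "mono_on {0..} w" "\<And>x. x > 0 \<Longrightarrow> w x > 0"
    and \<alpha>: "\<And>t. t \<ge> 0 \<Longrightarrow> (\<alpha> has_real_derivative \<alpha>' t) (at t within {0..})"
      "\<And>t. t \<ge> 0 \<Longrightarrow> \<alpha> t \<ge> 0" "mono_on {0..} \<alpha>" "\<And>t. t \<ge> 0 \<Longrightarrow> \<alpha> t \<le> t"
    and u: "continuous_on {0..} u" "\<And>t. t \<ge> 0 \<Longrightarrow> u t \<ge> 0"
    and ineq: "\<And>t. t \<ge> 0 \<Longrightarrow> u t powr m \<le> c powr (m / (m - n)) + m / (m - n) *
         (integral {0..\<alpha> t} (\<lambda>s. f s * u s powr n * w (u s))
          + integral {0..t} (\<lambda>s. g s * u s powr n * w (u s)))"
begin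

definition nonlin :: "real \<Rightarrow> real" where
  "nonlin s = u s powr n * w (u s)"

definition majorant :: "real \<Rightarrow> real" where
  "majorant t = c powr (m / (m - n)) + m / (m - n) *
     (integral {0..\<alpha> t} (\<lambda>s. f s * nonlin s) + integral {0..t} (\<lambda>s. g s * nonlin s))"

(* The Lyapunov-type function whose decrease yields the bound. *)
definition comparison :: "real \<Rightarrow> real" where
  "comparison t = Psi m n w (majorant t powr ((m - n) / m))
     - integral {0..\<alpha> t} f - integral {0..t} g"

(* Its derivative: Psi'(z) z' - (f(alpha s) alpha'(s) + g(s)) with z = majorant^r and
   z' = r majorant^(r-1) majorant'. *)
definition comparison_deriv :: "real \<Rightarrow> real" where
  "comparison_deriv s = (m - n) / m * majorant s powr ((m - n) / m - 1)
       * (m / (m - n) * (f (\<alpha> s) * nonlin (\<alpha> s) * \<alpha>' s + g s * nonlin s))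
       / w ((majorant s powr ((m - n) / m)) powr (1 / (m - n)))
     - (f (\<alpha> s) * \<alpha>' s + g s)"

lemma alpha_0: "\<alpha> 0 = 0"
  using \<alpha>(2,4)[of 0] by simp

lemma alpha_image: "\<alpha> ` {0..} \<subseteq> {0..}"
  using \<alpha>(2) by auto

lemma nonlin_cont: "continuous_on {0..} nonlin"
proof -
  have "continuous_on {0..} (\<lambda>s. u s powr n)"
    using u mn by (intro continuous_on_powr' continuous_on_const) auto
  moreover have "continuous_on {0..} (\<lambda>s. w (u s))"
    by (rule continuous_on_compose2[OF w(1) u(1)]) (use u(2) in auto)
  ultimately show ?thesis unfolding nonlin_def[abs_def] by (rule continuous_on_mult)
qed

lemma nonlin_nonneg: "s \<ge> 0 \<Longrightarrow> nonlin s \<ge> 0"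
  using u(2)[of s] w(2)[of "u s"] by (simp add: nonlin_def)

lemma weighted_nonlin:
  assumes p: "continuous_on {0..} p" "\<And>t. t \<ge> 0 \<Longrightarrow> p t \<ge> 0"
  shows "continuous_on {0..} (\<lambda>s. p s * nonlin s)" "\<And>s. s \<ge> 0 \<Longrightarrow> p s * nonlin s \<ge> 0"
proof -
  show "continuous_on {0..} (\<lambda>s. p s * nonlin s)"
    using p(1) nonlin_cont by (rule continuous_on_mult)
  show "p s * nonlin s \<ge> 0" if "s \<ge> 0" for s
    using p(2)[OF that] nonlin_nonneg[OF that] by simp
qed

lemma majorant_mono:
  assumes "0 \<le> s" "s \<le> t"
  shows "majorant s \<le> majorant t"
proof -
  have "\<alpha> s \<le> \<alpha> t" using mono_onD[OF \<alpha>(3)] assms by auto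
  then have "integral {0..\<alpha> s} (\<lambda>s. f s * nonlin s) \<le> integral {0..\<alpha> t} (\<lambda>s. f s * nonlin s)"
    using assms \<alpha>(2) by (intro integral_from_mono weighted_nonlin f) auto
  moreover have "integral {0..s} (\<lambda>s. g s * nonlin s) \<le> integral {0..t} (\<lambda>s. g s * nonlin s)"
    using assms by (intro integral_from_mono weighted_nonlin g) auto
  ultimately show ?thesis
    unfolding majorant_def using mn by (intro add_left_mono mult_left_mono) auto
qed

lemma majorant_0: "majorant 0 = c powr (m / (m - n))"
  by (simp add: majorant_def alpha_0)

lemma majorant_pos:
  assumes "t \<ge> 0" shows "majorant t > 0"
proof -
  have "c powr (m / (m - n)) > 0" using c by simp
  then show ?thesis using majorant_mono[of 0 t] majorant_0 assms by linarith
qed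

(* The hypothesis says exactly u^m <= majorant; since the majorant is nondecreasing,
   u <= majorant(t)^(1/m) on all of [0,t]. *)
lemma u_le_majorant:
  assumes "0 \<le> y" "y \<le> t"
  shows "u y \<le> majorant t powr (1 / m)"
proof -
  have "u y powr m \<le> majorant y"
    using ineq[of y] assms by (simp add: majorant_def nonlin_def mult.assoc)
  also have "\<dots> \<le> majorant t" using majorant_mono assms by simp
  finally have "(u y powr m) powr (1 / m) \<le> majorant t powr (1 / m)"
    using mn by (intro powr_mono2) auto
  then show ?thesis using u(2)[of y] assms mn by (simp add: powr_powr)
qed

lemma nonlin_le_majorant:
  assumes "0 \<le> y" "y \<le> t"
  shows "nonlin y \<le> (majorant t powr (1 / m)) powr n * w (majorant t powr (1 / m))"
proof -
  define q where "q = majorant t powr (1 / m)"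
  have uy: "0 \<le> u y" "u y \<le> q" using u(2) u_le_majorant assms by (auto simp: q_def)
  have "u y powr n \<le> q powr n" using uy mn by (intro powr_mono2) auto
  moreover have "w (u y) \<le> w q" using uy by (intro mono_onD[OF w(3)]) auto
  ultimately show ?thesis
    unfolding nonlin_def q_def[symmetric] using w(2) uy by (intro mult_mono) auto
qed

lemma majorant_has_derivative:
  assumes s: "s \<ge> 0"
  shows "(majorant has_real_derivative
           m / (m - n) * (f (\<alpha> s) * nonlin (\<alpha> s) * \<alpha>' s + g s * nonlin s)) (at s within {0..})"
proof -
  have dF: "((\<lambda>x. integral {0..\<alpha> x} (\<lambda>s. f s * nonlin s)) has_real_derivative
          f (\<alpha> s) * nonlin (\<alpha> s) * \<alpha>' s) (at s within {0..})"
    by (rule integral_upto_has_real_derivative[OF weighted_nonlin(1)[OF f] \<alpha>(1)[OF s] alpha_image s])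
  have dG: "((\<lambda>x. integral {0..x} (\<lambda>s. g s * nonlin s)) has_real_derivative g s * nonlin s)
                   (at s within {0..})"
    by (rule integral_from_has_real_derivative[OF weighted_nonlin(1)[OF g] s])
  have "(majorant has_real_derivative
           0 + m / (m - n) * (f (\<alpha> s) * nonlin (\<alpha> s) * \<alpha>' s + g s * nonlin s)) (at s within {0..})"
    unfolding majorant_def[abs_def] by (rule DERIV_add[OF DERIV_const DERIV_cmult[OF DERIV_add[OF dF dG]]])
  then show ?thesis by simp
qed

lemma comparison_has_derivative:
  assumes s: "s \<ge> 0"
  shows "(comparison has_real_derivative comparison_deriv s) (at s within {0..})"
proof -
  have z: "((\<lambda>x. majorant x powr ((m - n) / m)) has_real_derivative
             (m - n) / m * majorant s powr ((m - n) / m - 1)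
             * (m / (m - n) * (f (\<alpha> s) * nonlin (\<alpha> s) * \<alpha>' s + g s * nonlin s))) (at s within {0..})"
    by (rule DERIV_chain2[OF has_real_derivative_powr majorant_has_derivative])
      (use s majorant_pos in auto)
  have "majorant s powr ((m - n) / m) > 0" using majorant_pos[OF s] by simp
  from DERIV_chain2[OF Psi_has_real_derivative[OF w(1,4) this, where m = m and n = n] z]
  have psi: "((\<lambda>x. Psi m n w (majorant x powr ((m - n) / m))) has_real_derivative
             (m - n) / m * majorant s powr ((m - n) / m - 1)
             * (m / (m - n) * (f (\<alpha> s) * nonlin (\<alpha> s) * \<alpha>' s + g s * nonlin s))
             / w ((majorant s powr ((m - n) / m)) powr (1 / (m - n)))) (at s within {0..})"
    by (simp only: times_divide_eq_left mult_1_left)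
  have df: "((\<lambda>x. integral {0..\<alpha> x} f) has_real_derivative f (\<alpha> s) * \<alpha>' s) (at s within {0..})"
    by (rule integral_upto_has_real_derivative[OF f(1) \<alpha>(1)[OF s] alpha_image s])
  have dg: "((\<lambda>x. integral {0..x} g) has_real_derivative g s) (at s within {0..})"
    by (rule integral_from_has_real_derivative[OF g(1) s])
  show ?thesis
    unfolding comparison_def[abs_def] comparison_deriv_def using DERIV_diff[OF DERIV_diff[OF psi df] dg]
    by (simp add: diff_diff_eq)
qed

(* The comparison function is nonincreasing: its derivative is <= 0 for s > 0.  Here
   the monotonicity of alpha gives alpha' >= 0, and alpha(s) <= s places both arguments
   of the nonlinearity inside [0,s]. *)
lemma comparison_derivative_nonpos:
  assumes s: "s > 0"
  shows "comparison_deriv s \<le> 0"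
proof -
  define Q where "Q = (majorant s powr (1 / m)) powr n * w (majorant s powr (1 / m))"
  have "at s within {0..} = at s"
    using s by (intro at_within_interior) (simp add: interior_Ici)
  then have "(\<alpha> has_real_derivative \<alpha>' s) (at s)" using \<alpha>(1)[of s] s by simp
  then have \<alpha>'_nonneg: "\<alpha>' s \<ge> 0"
    by (rule mono_on_imp_deriv_nonneg[OF \<alpha>(3)]) (use s in \<open>simp add: interior_Ici\<close>)
  have "nonlin (\<alpha> s) \<le> Q" "nonlin s \<le> Q"
    using nonlin_le_majorant \<alpha>(2,4)[of s] s by (auto simp: Q_def)
  then have "f (\<alpha> s) * nonlin (\<alpha> s) * \<alpha>' s \<le> f (\<alpha> s) * Q * \<alpha>' s"
      "g s * nonlin s \<le> g s * Q"
    using f(2)[of "\<alpha> s"] g(2)[of s] \<alpha>(2)[of s] \<alpha>'_nonneg s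
    by (auto intro: mult_right_mono mult_left_mono)
  then have D_le: "f (\<alpha> s) * nonlin (\<alpha> s) * \<alpha>' s + g s * nonlin s
               \<le> (f (\<alpha> s) * \<alpha>' s + g s) * Q"
    by (simp add: algebra_simps)
  have s0: "s \<ge> 0" using s by simp
  have wq: "w (majorant s powr (1 / m)) > 0"
    using w(4) majorant_pos[OF s0] by simp
  show ?thesis
    unfolding comparison_deriv_def
    using majorant_power_derivative_bound[where w = w, OF mn majorant_pos[OF s0] wq D_le[unfolded Q_def]]
    by linarith
qed

lemma Psi_majorant_le:
  assumes t: "t \<ge> 0"
  shows "Psi m n w (majorant t powr ((m - n) / m))
           \<le> Psi m n w c + integral {0..\<alpha> t} f + integral {0..t} g"
proof -
  have "comparison t \<le> comparison 0"
    using comparison_has_derivative comparison_derivative_nonpos t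
    by (rule nonpos_derivative_imp_le_initial)
  moreover have "majorant 0 powr ((m - n) / m) = c"
    using c mn by (simp add: majorant_0 powr_powr)
  then have "comparison 0 = Psi m n w c"
    by (simp add: comparison_def alpha_0)
  ultimately show ?thesis
    unfolding comparison_def by linarith
qed

lemma u_le_Psi_inv:
  assumes t: "t \<ge> 0"
    and dom: "Psi m n w c + integral {0..\<alpha> t} f + integral {0..t} g \<in> Psi m n w ` {0<..}"
  shows "u t \<le> (Psi_inv m n w (Psi m n w c + integral {0..\<alpha> t} f + integral {0..t} g))
                  powr (1 / (m - n))"
proof -
  define z where "z = majorant t powr ((m - n) / m)"
  have z: "z > 0" using majorant_pos[OF t] by (simp add: z_def)
  have "u t \<le> majorant t powr (1 / m)" using u_le_majorant t by simp
  also have "\<dots> = z powr (1 / (m - n))" using mn by (simp add: z_def powr_powr)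
  also have "\<dots> \<le> (Psi_inv m n w (Psi m n w c + integral {0..\<alpha> t} f + integral {0..t} g))
                  powr (1 / (m - n))"
    using z mn Psi_majorant_le[OF t] dom
    by (intro powr_mono2 le_Psi_inv[OF w(1,4)]) (auto simp: z_def)
  finally show ?thesis .
qed

end

theorem corollary3:
  fixes m n c \<tau> :: real
    and f g w u \<alpha> :: "real \<Rightarrow> real"
  assumes mn: "m > n" "n > 0" and c: "c > 0"
    and f: "continuous_on {0..} f" "\<forall>t\<ge>0. f t \<ge> 0"
    and g: "continuous_on {0..} g" "\<forall>t\<ge>0. g t \<ge> 0"
    and w: "continuous_on {0..} w" "\<forall>t\<ge>0. w t \<ge> 0"
           "mono_on {0..} w" "\<forall>x>0. w x > 0"
    and \<alpha>: "\<exists>\<alpha>'. (\<forall>t\<ge>0. (\<alpha> has_real_derivative \<alpha>' t) (at t within {0..}))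
                     \<and> continuous_on {0..} \<alpha>'"
           "\<forall>t\<ge>0. \<alpha> t \<ge> 0" "mono_on {0..} \<alpha>" "\<forall>t\<ge>0. \<alpha> t \<le> t"
    and u: "continuous_on {0..} u" "\<forall>t\<ge>0. u t \<ge> 0"
    and ineq: "\<forall>t\<ge>0. u t powr m \<le> c powr (m / (m - n)) + m / (m - n) *
         (integral {0..\<alpha> t} (\<lambda>s. f s * u s powr n * w (u s))
          + integral {0..t} (\<lambda>s. g s * u s powr n * w (u s)))"
    and \<tau>: "\<tau> > 0"
    and dom: "\<forall>t\<in>{0..\<tau>}. Psi m n w c + integral {0..\<alpha> t} f + integral {0..t} g
                \<in> Psi m n w ` {0<..}"
  shows "\<forall>t\<in>{0..\<tau>}. u t \<le>
           (Psi_inv m n w (Psi m n w c + integral {0..\<alpha> t} f + integral {0..t} g))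
             powr (1 / (m - n))"
proof -
  obtain \<alpha>' where \<alpha>': "\<forall>t\<ge>0. (\<alpha> has_real_derivative \<alpha>' t) (at t within {0..})"
    using \<alpha>(1) by blast
  interpret delayed_bihari m n c f g w u \<alpha> \<alpha>'
    using mn c f g w \<alpha>(2-4) \<alpha>' u ineq by unfold_locales auto
  show ?thesis
    using u_le_Psi_inv dom by simp
qed

end
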